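(* Let $(\Omega,+)$ be a group and $a,b,c$ subgroups such that $a\top b$ and $a,b$ commute elementwise. Then $(a,b,c)$ is a transversal triple (i.e. additionally $b\top c$ and $c\top a$) if and only if there is a group isomorphism $\Omega\cong a\times a$ under which $a$ corresponds to the first factor, $b$ to the second factor and $c$ to the diagonal. Moreover, in this case, the set $U'_{ab}:=U_{ab}\cap\mathit{Gras}(\Omega)$ is a torsor (subtorsor of $U_{ab}$) which, taking $c$ as base point, is isomorphic to the group $\mathrm{Aut}(a)$ of group automorphisms of $a$.
   Context: $(\Omega,+)$ is a group written additively but not necessarily abelian; $\mathit{Gras}(\Omega)$ is the set of subgroups. For subsets $x,y$, $x\top y$ means every $\omega\in\Omega$ has a unique decomposition $\omega=\xi+\eta$ with $\xi\in x,\eta\in y$. $U_{ab}$ is the set $\{x\subseteq\Omega: a\top x,\ x\top b\}$ with the torsor law $(x,y,z)\mapsto\Gamma(x,a,y,b,z)$, where $\Gamma(x,a,y,b,z)=\{\omega:\exists\alpha\in a,\beta\in b:\ \alpha+\omega+\beta\in y,\ \alpha+\omega\in z,\ \omega+\beta\in x\}$. A torsor with base point $c$ is regarded as the group with product $xz:=\Gamma(x,a,c,b,z)$ and neutral element $c$. *)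

theory Defs
  imports "HOL-Algebra.Bij"
begin

text \<open>The group Omega is a HOL-Algebra group G (multiplicative notation stands for
the paper's additive notation; no commutativity assumed).\<close>

definition transv :: "('g, 'm) monoid_scheme \<Rightarrow> 'g set \<Rightarrow> 'g set \<Rightarrow> bool" where
  "transv G x y \<longleftrightarrow>
     (\<forall>\<omega>\<in>carrier G. \<exists>!p. fst p \<in> x \<and> snd p \<in> y \<and> \<omega> = fst p \<otimes>\<^bsub>G\<^esub> snd p)"

definition Gamma :: "('g, 'm) monoid_scheme \<Rightarrow> 'g set \<Rightarrow> 'g set \<Rightarrow> 'g set \<Rightarrow> 'g set \<Rightarrow> 'g set \<Rightarrow> 'g set" where
  "Gamma G x a y b z = {\<omega> \<in> carrier G. \<exists>\<alpha>\<in>a. \<exists>\<beta>\<in>b.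
      \<alpha> \<otimes>\<^bsub>G\<^esub> \<omega> \<otimes>\<^bsub>G\<^esub> \<beta> \<in> y \<and> \<alpha> \<otimes>\<^bsub>G\<^esub> \<omega> \<in> z \<and> \<omega> \<otimes>\<^bsub>G\<^esub> \<beta> \<in> x}"

definition Uab :: "('g, 'm) monoid_scheme \<Rightarrow> 'g set \<Rightarrow> 'g set \<Rightarrow> 'g set set" where
  "Uab G a b = {x. x \<subseteq> carrier G \<and> transv G a x \<and> transv G x b}"

definition Gras :: "('g, 'm) monoid_scheme \<Rightarrow> 'g set set" where
  "Gras G = {x. subgroup x G}"

definition torsor :: "'t set \<Rightarrow> ('t \<Rightarrow> 't \<Rightarrow> 't \<Rightarrow> 't) \<Rightarrow> bool" where
  "torsor T m \<longleftrightarrow> T \<noteq> {}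
     \<and> (\<forall>x\<in>T. \<forall>y\<in>T. \<forall>z\<in>T. m x y z \<in> T)
     \<and> (\<forall>x\<in>T. \<forall>y\<in>T. m x x y = y \<and> m x y y = x)
     \<and> (\<forall>x\<in>T. \<forall>y\<in>T. \<forall>z\<in>T. \<forall>u\<in>T. \<forall>v\<in>T.
          m (m x y z) u v = m x y (m z u v) \<and> m x y (m z u v) = m x (m u z y) v)"

definition Ulaw :: "('g, 'm) monoid_scheme \<Rightarrow> 'g set \<Rightarrow> 'g set \<Rightarrow> 'g set \<Rightarrow> 'g set \<Rightarrow> 'g set \<Rightarrow> 'g set" where
  "Ulaw G a b x y z = Gamma G x a y b z"

definition torsor_group :: "'t set \<Rightarrow> ('t \<Rightarrow> 't \<Rightarrow> 't \<Rightarrow> 't) \<Rightarrow> 't \<Rightarrow> 't monoid" where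
  "torsor_group T m c = \<lparr>carrier = T, mult = (\<lambda>x z. m x c z), one = c\<rparr>"

end

theory Submission
  imports Defs
begin

text \<open>Since \<open>a\<close> and \<open>b\<close> commute elementwise and \<open>a \<top> b\<close>, \<open>\<Omega>\<close> is the internal direct
product \<open>a \<times> b\<close>. A subgroup \<open>x\<close> with \<open>a \<top> x\<close> and \<open>x \<top> b\<close> is then the graph
\<open>{f \<beta> + \<beta> | \<beta> \<in> b}\<close> of a unique isomorphism \<open>f = slope x : b \<rightarrow> a\<close>, and conversely the graph
of every such isomorphism is a common complement of \<open>a\<close> and \<open>b\<close>. Under this correspondence
\<open>\<Gamma>(x,a,y,b,z)\<close> is the graph of \<open>slope x \<circ> (slope y)\<inverse> \<circ> slope z\<close>, so the torsor laws reduce to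
identities between compositions of bijections, and \<open>x \<mapsto> slope x \<circ> (slope c)\<inverse>\<close> is an isomorphism
onto \<open>Aut(a)\<close>. For a common complement \<open>c\<close>, the map \<open>\<alpha> + \<beta> \<mapsto> (\<alpha>, slope c \<beta>)\<close> identifies
\<open>\<Omega>\<close> with \<open>a \<times> a\<close> and sends \<open>c\<close> to the diagonal; conversely, transversality is transported
back along any such isomorphism from the diagonal in \<open>a \<times> a\<close>.\<close>

lemma transvI:
  assumes "\<And>\<omega>. \<omega> \<in> carrier G \<Longrightarrow> \<exists>\<xi>\<in>x. \<exists>\<eta>\<in>y. \<omega> = \<xi> \<otimes>\<^bsub>G\<^esub> \<eta>"
    and "\<And>\<xi> \<xi>' \<eta> \<eta>'. \<lbrakk>\<xi> \<in> x; \<xi>' \<in> x; \<eta> \<in> y; \<eta>' \<in> y; \<xi> \<otimes>\<^bsub>G\<^esub> \<eta> \<in> carrier G;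
      \<xi> \<otimes>\<^bsub>G\<^esub> \<eta> = \<xi>' \<otimes>\<^bsub>G\<^esub> \<eta>'\<rbrakk> \<Longrightarrow> \<xi> = \<xi>' \<and> \<eta> = \<eta>'"
  shows "transv G x y"
  unfolding transv_def
proof
  fix \<omega> assume "\<omega> \<in> carrier G"
  then obtain \<xi> \<eta> where "\<xi> \<in> x" "\<eta> \<in> y" "\<omega> = \<xi> \<otimes>\<^bsub>G\<^esub> \<eta>" using assms(1) by blast
  then show "\<exists>!p. fst p \<in> x \<and> snd p \<in> y \<and> \<omega> = fst p \<otimes>\<^bsub>G\<^esub> snd p"
    using assms(2) \<open>\<omega> \<in> carrier G\<close> by (intro ex1I[of _ "(\<xi>, \<eta>)"]) (simp, metis prod.collapse)
qed

lemma transv_decomposition: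
  "transv G x y \<Longrightarrow> \<omega> \<in> carrier G \<Longrightarrow> \<exists>\<xi>\<in>x. \<exists>\<eta>\<in>y. \<omega> = \<xi> \<otimes>\<^bsub>G\<^esub> \<eta>"
  unfolding transv_def by (metis prod.collapse)

lemma transv_unique:
  assumes "transv G x y" "\<xi> \<in> x" "\<xi>' \<in> x" "\<eta> \<in> y" "\<eta>' \<in> y"
    and "\<xi> \<otimes>\<^bsub>G\<^esub> \<eta> \<in> carrier G" "\<xi> \<otimes>\<^bsub>G\<^esub> \<eta> = \<xi>' \<otimes>\<^bsub>G\<^esub> \<eta>'"
  shows "\<xi> = \<xi>' \<and> \<eta> = \<eta>'"
proof -
  have "\<exists>!p. fst p \<in> x \<and> snd p \<in> y \<and> \<xi> \<otimes>\<^bsub>G\<^esub> \<eta> = fst p \<otimes>\<^bsub>G\<^esub> snd p"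
    using assms(1,6) unfolding transv_def by blast
  then have "(\<xi>, \<eta>) = (\<xi>', \<eta>')" using assms(2-5,7) by (metis fst_conv snd_conv)
  then show ?thesis by simp
qed

context group
begin

lemma mult_inv_cancel_left [simp]: "x \<in> carrier G \<Longrightarrow> y \<in> carrier G \<Longrightarrow> x \<otimes> (inv x \<otimes> y) = y"
  by (simp flip: m_assoc)

lemma inv_mult_cancel_left [simp]: "x \<in> carrier G \<Longrightarrow> y \<in> carrier G \<Longrightarrow> inv x \<otimes> (x \<otimes> y) = y"
  by (simp flip: m_assoc)

lemma transv_sym:
  assumes x: "subgroup x G" and y: "subgroup y G" and "transv G x y"
  shows "transv G y x"
proof (rule transvI)
  fix \<omega> assume "\<omega> \<in> carrier G"
  then obtain \<xi> \<eta> where "\<xi> \<in> x" "\<eta> \<in> y" "inv \<omega> = \<xi> \<otimes> \<eta>"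
    using transv_decomposition[OF \<open>transv G x y\<close>] by blast
  moreover from this have "\<omega> = inv \<eta> \<otimes> inv \<xi>"
    using \<open>\<omega> \<in> carrier G\<close> x y by (metis inv_inv inv_mult_group subgroup.mem_carrier)
  ultimately show "\<exists>\<eta>\<in>y. \<exists>\<xi>\<in>x. \<omega> = \<eta> \<otimes> \<xi>"
    using subgroup.m_inv_closed[OF x] subgroup.m_inv_closed[OF y] by blast
next
  fix \<eta> \<eta>' \<xi> \<xi>' assume h: "\<eta> \<in> y" "\<eta>' \<in> y" "\<xi> \<in> x" "\<xi>' \<in> x" "\<eta> \<otimes> \<xi> = \<eta>' \<otimes> \<xi>'"
  then have c: "\<eta> \<in> carrier G" "\<eta>' \<in> carrier G" "\<xi> \<in> carrier G" "\<xi>' \<in> carrier G"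
    using x y subgroup.mem_carrier by metis+
  have "inv \<xi> \<otimes> inv \<eta> = inv \<xi>' \<otimes> inv \<eta>'"
    using h(5) c by (simp flip: inv_mult_group)
  then have "inv \<xi> = inv \<xi>' \<and> inv \<eta> = inv \<eta>'"
    using transv_unique[OF \<open>transv G x y\<close>, of "inv \<xi>" "inv \<xi>'" "inv \<eta>" "inv \<eta>'"]
      h(1-4) c x y by (simp add: subgroup.m_inv_closed)
  then show "\<eta> = \<eta>' \<and> \<xi> = \<xi>'" using c inv_inj by (auto dest: inj_onD)
qed

lemma transv_inter_trivial:
  assumes x: "subgroup x G" and y: "subgroup y G" and "transv G x y" "z \<in> x" "z \<in> y"
  shows "z = \<one>"
proof -
  have z: "z \<in> carrier G" using subgroup.mem_carrier[OF x \<open>z \<in> x\<close>] .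
  have "z \<otimes> \<one> \<in> carrier G" "z \<otimes> \<one> = \<one> \<otimes> z" using z by simp_all
  from transv_unique[OF \<open>transv G x y\<close> \<open>z \<in> x\<close> subgroup.one_closed[OF x]
      subgroup.one_closed[OF y] \<open>z \<in> y\<close> this] show ?thesis ..
qed

lemma transv_iso_image:
  assumes \<phi>: "\<phi> \<in> iso G H" and "x \<subseteq> carrier G" "y \<subseteq> carrier G"
    and "transv H (\<phi> ` x) (\<phi> ` y)"
  shows "transv G x y"
proof -
  have hom: "\<phi> \<in> hom G H" and inj: "inj_on \<phi> (carrier G)"
    using \<phi> by (auto simp: iso_iff)
  show ?thesis
  proof (rule transvI)
    fix \<omega> assume \<omega>: "\<omega> \<in> carrier G"
    then obtain \<xi> \<eta> where "\<xi> \<in> x" "\<eta> \<in> y" "\<phi> \<omega> = \<phi> \<xi> \<otimes>\<^bsub>H\<^esub> \<phi> \<eta>"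
      using transv_decomposition[OF assms(4), of "\<phi> \<omega>"] hom_in_carrier[OF hom] by blast
    moreover from this have "\<phi> \<omega> = \<phi> (\<xi> \<otimes> \<eta>)"
      using assms(2,3) hom_mult[OF hom] by (metis subsetD)
    moreover have "\<xi> \<otimes> \<eta> \<in> carrier G"
      using calculation assms(2,3) by blast
    ultimately show "\<exists>\<xi>\<in>x. \<exists>\<eta>\<in>y. \<omega> = \<xi> \<otimes> \<eta>"
      using inj_onD[OF inj _ \<omega>] by blast
  next
    fix \<xi> \<xi>' \<eta> \<eta>' assume h: "\<xi> \<in> x" "\<xi>' \<in> x" "\<eta> \<in> y" "\<eta>' \<in> y" "\<xi> \<otimes> \<eta> = \<xi>' \<otimes> \<eta>'"
    then have eq: "\<phi> \<xi> \<otimes>\<^bsub>H\<^esub> \<phi> \<eta> = \<phi> \<xi>' \<otimes>\<^bsub>H\<^esub> \<phi> \<eta>'"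
      using assms(2,3) hom_mult[OF hom] by (metis subsetD)
    have "\<phi> \<xi> \<otimes>\<^bsub>H\<^esub> \<phi> \<eta> \<in> carrier H"
      using h assms(2,3) hom_mult[OF hom] hom_in_carrier[OF hom] by (metis m_closed subsetD)
    then have "\<phi> \<xi> = \<phi> \<xi>' \<and> \<phi> \<eta> = \<phi> \<eta>'"
      using transv_unique[OF assms(4), of "\<phi> \<xi>" "\<phi> \<xi>'" "\<phi> \<eta>" "\<phi> \<eta>'"] h eq by blast
    then show "\<xi> = \<xi>' \<and> \<eta> = \<eta>'"
      using h assms(2,3) by (auto intro: inj_onD[OF inj])
  qed
qed

lemma transv_DirProd_diagonal:
  "transv (G \<times>\<times> G) ({\<one>} \<times> carrier G) {(g, g) | g. g \<in> carrier G}"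
  "transv (G \<times>\<times> G) {(g, g) | g. g \<in> carrier G} (carrier G \<times> {\<one>})"
proof -
  show "transv (G \<times>\<times> G) ({\<one>} \<times> carrier G) {(g, g) | g. g \<in> carrier G}"
  proof (rule transvI)
    fix \<omega> assume "\<omega> \<in> carrier (G \<times>\<times> G)"
    then obtain p q where "\<omega> = (p, q)" "p \<in> carrier G" "q \<in> carrier G" by auto
    then have "\<omega> = (\<one>, q \<otimes> inv p) \<otimes>\<^bsub>G \<times>\<times> G\<^esub> (p, p)" by (simp add: m_assoc)
    then show "\<exists>\<xi>\<in>{\<one>} \<times> carrier G. \<exists>\<eta>\<in>{(g, g) | g. g \<in> carrier G}. \<omega> = \<xi> \<otimes>\<^bsub>G \<times>\<times> G\<^esub> \<eta>"
      using \<open>p \<in> carrier G\<close> \<open>q \<in> carrier G\<close> by blast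
  next
    fix \<xi> \<xi>' \<eta> \<eta>'
    assume "\<xi> \<in> {\<one>} \<times> carrier G" "\<xi>' \<in> {\<one>} \<times> carrier G"
      "\<eta> \<in> {(g, g) | g. g \<in> carrier G}" "\<eta>' \<in> {(g, g) | g. g \<in> carrier G}"
      "\<xi> \<otimes>\<^bsub>G \<times>\<times> G\<^esub> \<eta> = \<xi>' \<otimes>\<^bsub>G \<times>\<times> G\<^esub> \<eta>'"
    then show "\<xi> = \<xi>' \<and> \<eta> = \<eta>'" by clarsimp
  qed
  show "transv (G \<times>\<times> G) {(g, g) | g. g \<in> carrier G} (carrier G \<times> {\<one>})"
  proof (rule transvI)
    fix \<omega> assume "\<omega> \<in> carrier (G \<times>\<times> G)"
    then obtain p q where "\<omega> = (p, q)" "p \<in> carrier G" "q \<in> carrier G" by auto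
    then have "\<omega> = (q, q) \<otimes>\<^bsub>G \<times>\<times> G\<^esub> (inv q \<otimes> p, \<one>)" by (simp add: m_assoc[symmetric])
    then show "\<exists>\<xi>\<in>{(g, g) | g. g \<in> carrier G}. \<exists>\<eta>\<in>carrier G \<times> {\<one>}. \<omega> = \<xi> \<otimes>\<^bsub>G \<times>\<times> G\<^esub> \<eta>"
      using \<open>p \<in> carrier G\<close> \<open>q \<in> carrier G\<close> by blast
  next
    fix \<xi> \<xi>' \<eta> \<eta>'
    assume "\<xi> \<in> {(g, g) | g. g \<in> carrier G}" "\<xi>' \<in> {(g, g) | g. g \<in> carrier G}"
      "\<eta> \<in> carrier G \<times> {\<one>}" "\<eta>' \<in> carrier G \<times> {\<one>}"
      "\<xi> \<otimes>\<^bsub>G \<times>\<times> G\<^esub> \<eta> = \<xi>' \<otimes>\<^bsub>G \<times>\<times> G\<^esub> \<eta>'"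
    then show "\<xi> = \<xi>' \<and> \<eta> = \<eta>'" by clarsimp
  qed
qed

lemma transv_of_product_iso:
  assumes a: "subgroup a G" and "b \<subseteq> carrier G" "c \<subseteq> carrier G"
    and \<phi>: "\<phi> \<in> iso G (G\<lparr>carrier := a\<rparr> \<times>\<times> G\<lparr>carrier := a\<rparr>)"
    and "\<phi> ` a = a \<times> {\<one>}" "\<phi> ` b = {\<one>} \<times> a" "\<phi> ` c = {(x, x) | x. x \<in> a}"
  shows "transv G b c \<and> transv G c a"
  using transv_iso_image[OF \<phi>] group.transv_DirProd_diagonal[OF subgroup_imp_group[OF a]]
    assms subgroup.subset[OF a] by simp

lemma restrict_iso_in_auto: "f \<in> iso G G \<Longrightarrow> restrict f (carrier G) \<in> auto G"
  unfolding auto_def Bij_def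
  by (auto simp: iso_def intro: hom_eq)

end

lemma auto_imp_iso: "h \<in> auto G \<Longrightarrow> h \<in> iso G G"
  unfolding auto_def Bij_def iso_def by blast

locale internal_direct_product = group G for G (structure) +
  fixes a b :: "'a set"
  assumes a_subgroup: "subgroup a G" and b_subgroup: "subgroup b G"
    and transv_ab: "transv G a b"
    and commute: "\<And>\<alpha> \<beta>. \<alpha> \<in> a \<Longrightarrow> \<beta> \<in> b \<Longrightarrow> \<alpha> \<otimes> \<beta> = \<beta> \<otimes> \<alpha>"
begin

abbreviation "A \<equiv> G\<lparr>carrier := a\<rparr>"

abbreviation "B \<equiv> G\<lparr>carrier := b\<rparr>"

declare subgroup.mem_carrier[OF a_subgroup, simp] subgroup.mem_carrier[OF b_subgroup, simp]
  subgroup.m_closed[OF a_subgroup, simp] subgroup.m_closed[OF b_subgroup, simp]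
  subgroup.m_inv_closed[OF a_subgroup, simp] subgroup.m_inv_closed[OF b_subgroup, simp]
  subgroup.one_closed[OF a_subgroup, simp] subgroup.one_closed[OF b_subgroup, simp]

lemma A_group: "group A" and B_group: "group B"
  using subgroup_imp_group a_subgroup b_subgroup by blast+

lemma decomposition: "\<omega> \<in> carrier G \<Longrightarrow> \<exists>\<alpha>\<in>a. \<exists>\<beta>\<in>b. \<omega> = \<alpha> \<otimes> \<beta>"
  using transv_decomposition[OF transv_ab] .

lemma decomposition_unique:
  "\<lbrakk>\<alpha> \<in> a; \<alpha>' \<in> a; \<beta> \<in> b; \<beta>' \<in> b; \<alpha> \<otimes> \<beta> = \<alpha>' \<otimes> \<beta>'\<rbrakk> \<Longrightarrow> \<alpha> = \<alpha>' \<and> \<beta> = \<beta>'"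
  using transv_unique[OF transv_ab] by simp

lemma mult_components:
  assumes "\<alpha> \<in> a" "\<alpha>' \<in> a" "\<beta> \<in> b" "\<beta>' \<in> b"
  shows "(\<alpha> \<otimes> \<beta>) \<otimes> (\<alpha>' \<otimes> \<beta>') = (\<alpha> \<otimes> \<alpha>') \<otimes> (\<beta> \<otimes> \<beta>')"
proof -
  have "(\<alpha> \<otimes> \<beta>) \<otimes> (\<alpha>' \<otimes> \<beta>') = \<alpha> \<otimes> (\<beta> \<otimes> \<alpha>') \<otimes> \<beta>'"
    using assms by (simp add: m_assoc)
  also have "\<dots> = \<alpha> \<otimes> (\<alpha>' \<otimes> \<beta>) \<otimes> \<beta>'"
    using assms commute[of \<alpha>' \<beta>] by simp
  also have "\<dots> = (\<alpha> \<otimes> \<alpha>') \<otimes> (\<beta> \<otimes> \<beta>')"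
    using assms by (simp add: m_assoc)
  finally show ?thesis .
qed

lemma inv_components: "\<alpha> \<in> a \<Longrightarrow> \<beta> \<in> b \<Longrightarrow> inv (\<alpha> \<otimes> \<beta>) = inv \<alpha> \<otimes> inv \<beta>"
  using commute[of "inv \<alpha>" "inv \<beta>"] by (simp add: inv_mult_group)

definition proj_a :: "'a \<Rightarrow> 'a" where
  "proj_a \<omega> = (THE \<alpha>. \<alpha> \<in> a \<and> (\<exists>\<beta>\<in>b. \<omega> = \<alpha> \<otimes> \<beta>))"

definition proj_b :: "'a \<Rightarrow> 'a" where
  "proj_b \<omega> = (THE \<beta>. \<beta> \<in> b \<and> (\<exists>\<alpha>\<in>a. \<omega> = \<alpha> \<otimes> \<beta>))"

lemma proj_a_eq [simp]: "\<alpha> \<in> a \<Longrightarrow> \<beta> \<in> b \<Longrightarrow> proj_a (\<alpha> \<otimes> \<beta>) = \<alpha>"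
  unfolding proj_a_def by (rule the_equality) (use decomposition_unique in auto)

lemma proj_b_eq [simp]: "\<alpha> \<in> a \<Longrightarrow> \<beta> \<in> b \<Longrightarrow> proj_b (\<alpha> \<otimes> \<beta>) = \<beta>"
  unfolding proj_b_def by (rule the_equality) (use decomposition_unique in auto)

lemma proj_decomposition:
  assumes "\<omega> \<in> carrier G"
  shows "proj_a \<omega> \<in> a" "proj_b \<omega> \<in> b" "proj_a \<omega> \<otimes> proj_b \<omega> = \<omega>"
  using decomposition[OF assms] by auto

lemma proj_mult:
  assumes "\<omega> \<in> carrier G" "\<omega>' \<in> carrier G"
  shows "proj_a (\<omega> \<otimes> \<omega>') = proj_a \<omega> \<otimes> proj_a \<omega>'" "proj_b (\<omega> \<otimes> \<omega>') = proj_b \<omega> \<otimes> proj_b \<omega>'"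
proof -
  have "\<omega> \<otimes> \<omega>' = (proj_a \<omega> \<otimes> proj_a \<omega>') \<otimes> (proj_b \<omega> \<otimes> proj_b \<omega>')"
    using assms proj_decomposition mult_components by metis
  then show "proj_a (\<omega> \<otimes> \<omega>') = proj_a \<omega> \<otimes> proj_a \<omega>'" "proj_b (\<omega> \<otimes> \<omega>') = proj_b \<omega> \<otimes> proj_b \<omega>'"
    using assms proj_decomposition by simp_all
qed

lemma proj_of_a: "\<alpha> \<in> a \<Longrightarrow> proj_a \<alpha> = \<alpha> \<and> proj_b \<alpha> = \<one>"
  using proj_a_eq[of \<alpha> \<one>] proj_b_eq[of \<alpha> \<one>] by simp

lemma proj_of_b: "\<beta> \<in> b \<Longrightarrow> proj_a \<beta> = \<one> \<and> proj_b \<beta> = \<beta>"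
  using proj_a_eq[of \<one> \<beta>] proj_b_eq[of \<one> \<beta>] by simp

definition complements :: "'a set set" where
  "complements = {x. subgroup x G \<and> transv G a x \<and> transv G x b}"

definition slope :: "'a set \<Rightarrow> 'a \<Rightarrow> 'a" where
  "slope x \<beta> = (THE \<alpha>. \<alpha> \<in> a \<and> \<alpha> \<otimes> \<beta> \<in> x)"

definition graph :: "('a \<Rightarrow> 'a) \<Rightarrow> 'a set" where
  "graph f = (\<lambda>\<beta>. f \<beta> \<otimes> \<beta>) ` b"

lemma complementsD:
  assumes "x \<in> complements"
  shows "subgroup x G" "transv G a x" "transv G x b"
  using assms unfolding complements_def by auto

lemma slope_unique:
  assumes x: "x \<in> complements" and "\<beta> \<in> b" "\<alpha> \<in> a" "\<alpha>' \<in> a" "\<alpha> \<otimes> \<beta> \<in> x" "\<alpha>' \<otimes> \<beta> \<in> x"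
  shows "\<alpha> = \<alpha>'"
proof -
  note sx = complementsD(1)[OF x]
  have "\<alpha> \<otimes> inv \<alpha>' = (\<alpha> \<otimes> \<beta>) \<otimes> inv (\<alpha>' \<otimes> \<beta>)"
    using assms by (simp add: inv_mult_group m_assoc)
  also have "\<dots> \<in> x"
    using assms subgroup.m_closed[OF sx] subgroup.m_inv_closed[OF sx] by blast
  finally have "\<alpha> \<otimes> inv \<alpha>' = \<one>"
    using transv_inter_trivial[OF a_subgroup sx complementsD(2)[OF x]] assms by simp
  then show ?thesis using inv_solve_right'[of \<one> \<alpha> \<alpha>'] assms by simp
qed

lemma slope_closed [simp]:
  assumes x: "x \<in> complements" and "\<beta> \<in> b"
  shows "slope x \<beta> \<in> a" "slope x \<beta> \<otimes> \<beta> \<in> x"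
proof -
  note sx = complementsD(1)[OF x]
  obtain \<alpha> \<xi> where "\<alpha> \<in> a" "\<xi> \<in> x" "\<beta> = \<alpha> \<otimes> \<xi>"
    using transv_decomposition[OF complementsD(2)[OF x], of \<beta>] \<open>\<beta> \<in> b\<close> by auto
  then have witness: "inv \<alpha> \<in> a \<and> inv \<alpha> \<otimes> \<beta> \<in> x"
    using subgroup.mem_carrier[OF sx] by (simp add: m_assoc[symmetric])
  have "slope x \<beta> \<in> a \<and> slope x \<beta> \<otimes> \<beta> \<in> x"
    unfolding slope_def
    by (rule theI[of _ "inv \<alpha>"]) (use witness slope_unique[OF x \<open>\<beta> \<in> b\<close>] in blast)+
  then show "slope x \<beta> \<in> a" "slope x \<beta> \<otimes> \<beta> \<in> x" by auto
qed

lemma mem_complement_iff: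
  "x \<in> complements \<Longrightarrow> \<alpha> \<in> a \<Longrightarrow> \<beta> \<in> b \<Longrightarrow> \<alpha> \<otimes> \<beta> \<in> x \<longleftrightarrow> slope x \<beta> = \<alpha>"
  using slope_closed slope_unique by metis

lemma slope_one [simp]: "x \<in> complements \<Longrightarrow> slope x \<one> = \<one>"
  using mem_complement_iff[of x \<one> \<one>] complementsD(1) subgroup.one_closed by fastforce

lemma complement_eq_graph:
  assumes x: "x \<in> complements"
  shows "x = graph (slope x)"
proof
  show "x \<subseteq> graph (slope x)"
  proof
    fix \<xi> assume "\<xi> \<in> x"
    moreover obtain \<alpha> \<beta> where "\<alpha> \<in> a" "\<beta> \<in> b" "\<xi> = \<alpha> \<otimes> \<beta>"
      using decomposition subgroup.mem_carrier[OF complementsD(1)[OF x] \<open>\<xi> \<in> x\<close>] by blast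
    ultimately show "\<xi> \<in> graph (slope x)"
      unfolding graph_def using mem_complement_iff[OF x] by auto
  qed
  show "graph (slope x) \<subseteq> x"
    unfolding graph_def using slope_closed[OF x] by auto
qed

lemma complements_eqI:
  assumes "x \<in> complements" "y \<in> complements" "\<And>\<beta>. \<beta> \<in> b \<Longrightarrow> slope x \<beta> = slope y \<beta>"
  shows "x = y"
proof -
  have "graph (slope x) = graph (slope y)"
    unfolding graph_def using assms(3) by (simp cong: image_cong)
  then show ?thesis using complement_eq_graph assms(1,2) by metis
qed

lemma mem_complements_iff_transv:
  assumes "subgroup c G"
  shows "c \<in> complements \<longleftrightarrow> transv G b c \<and> transv G c a"
  unfolding complements_def using transv_sym assms a_subgroup b_subgroup by blast

lemma slope_iso:
  assumes x: "x \<in> complements"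
  shows "slope x \<in> iso B A"
proof -
  note sx = complementsD(1)[OF x]
  have "slope x \<in> hom B A"
  proof (rule homI)
    fix \<beta> \<beta>' assume "\<beta> \<in> carrier B" "\<beta>' \<in> carrier B"
    then have b: "\<beta> \<in> b" "\<beta>' \<in> b" by simp_all
    have "(slope x \<beta> \<otimes> slope x \<beta>') \<otimes> (\<beta> \<otimes> \<beta>') = (slope x \<beta> \<otimes> \<beta>) \<otimes> (slope x \<beta>' \<otimes> \<beta>')"
      using b slope_closed[OF x] mult_components[of "slope x \<beta>" "slope x \<beta>'" \<beta> \<beta>'] by simp
    also have "\<dots> \<in> x"
      using b slope_closed[OF x] subgroup.m_closed[OF sx] by blast
    finally show "slope x (\<beta> \<otimes>\<^bsub>B\<^esub> \<beta>') = slope x \<beta> \<otimes>\<^bsub>A\<^esub> slope x \<beta>'"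
      using b slope_closed[OF x] mem_complement_iff[OF x] by simp
  qed (use slope_closed[OF x] in simp)
  moreover have "inj_on (slope x) b"
  proof
    fix \<beta> \<beta>' assume b: "\<beta> \<in> b" "\<beta>' \<in> b" and eq: "slope x \<beta> = slope x \<beta>'"
    have "inv \<beta> \<otimes> \<beta>' = inv (slope x \<beta> \<otimes> \<beta>) \<otimes> (slope x \<beta>' \<otimes> \<beta>')"
      using b eq slope_closed[OF x] by (simp add: inv_mult_group m_assoc)
    also have "\<dots> \<in> x"
      using b slope_closed[OF x] subgroup.m_closed[OF sx] subgroup.m_inv_closed[OF sx] by blast
    finally have "inv \<beta> \<otimes> \<beta>' = \<one>"
      using transv_inter_trivial[OF sx b_subgroup complementsD(3)[OF x]] b by simp
    then show "\<beta> = \<beta>'" using b by (simp add: inv_solve_left')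
  qed
  moreover have "a \<subseteq> slope x ` b"
  proof
    fix \<alpha> assume "\<alpha> \<in> a"
    then obtain \<xi> \<beta> where "\<xi> \<in> x" "\<beta> \<in> b" "\<alpha> = \<xi> \<otimes> \<beta>"
      using transv_decomposition[OF complementsD(3)[OF x], of \<alpha>] by auto
    then have "\<alpha> \<otimes> inv \<beta> \<in> x"
      using subgroup.mem_carrier[OF sx] by (simp add: m_assoc)
    then have "slope x (inv \<beta>) = \<alpha>"
      using mem_complement_iff[OF x] \<open>\<alpha> \<in> a\<close> \<open>\<beta> \<in> b\<close> by simp
    then show "\<alpha> \<in> slope x ` b" using \<open>\<beta> \<in> b\<close> by (metis image_eqI subgroup.m_inv_closed b_subgroup)
  qed
  ultimately show ?thesis
    using slope_closed[OF x] by (auto simp: iso_iff)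
qed

lemma slope_bij: "x \<in> complements \<Longrightarrow> bij_betw (slope x) b a"
  using slope_iso by (simp add: iso_def)

lemma inv_slope_closed [simp]: "x \<in> complements \<Longrightarrow> \<alpha> \<in> a \<Longrightarrow> inv_into b (slope x) \<alpha> \<in> b"
  using slope_bij bij_betw_imp_surj_on inv_into_into by metis

lemma slope_inv_slope [simp]: "x \<in> complements \<Longrightarrow> \<alpha> \<in> a \<Longrightarrow> slope x (inv_into b (slope x) \<alpha>) = \<alpha>"
  using slope_bij bij_betw_inv_into_right by metis

lemma inv_slope_slope [simp]: "x \<in> complements \<Longrightarrow> \<beta> \<in> b \<Longrightarrow> inv_into b (slope x) (slope x \<beta>) = \<beta>"
  using slope_bij bij_betw_inv_into_left by metis

lemma inv_slope_iso: "x \<in> complements \<Longrightarrow> inv_into b (slope x) \<in> iso A B"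
  using group.iso_set_sym[OF B_group slope_iso] by simp

lemma hom_BA_closed: "f \<in> hom B A \<Longrightarrow> \<beta> \<in> b \<Longrightarrow> f \<beta> \<in> a"
  using hom_in_carrier by fastforce

lemma hom_BA_mult: "f \<in> hom B A \<Longrightarrow> \<beta> \<in> b \<Longrightarrow> \<beta>' \<in> b \<Longrightarrow> f (\<beta> \<otimes> \<beta>') = f \<beta> \<otimes> f \<beta>'"
  using hom_mult by fastforce

lemma hom_BA_inv:
  assumes f: "f \<in> hom B A" and "\<beta> \<in> b"
  shows "f (inv \<beta>) = inv (f \<beta>)"
proof -
  have "f (inv \<beta>) \<otimes> f \<beta> = f \<one>"
    using hom_BA_mult[OF f, of "inv \<beta>" \<beta>] \<open>\<beta> \<in> b\<close> by simp
  also have "\<dots> = \<one>" using hom_one[OF f B_group A_group] by simp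
  finally show ?thesis
    using hom_BA_closed[OF f] \<open>\<beta> \<in> b\<close> by (simp add: inv_equality)
qed

lemma graph_subgroup:
  assumes f: "f \<in> hom B A"
  shows "subgroup (graph f) G"
proof (rule subgroupI)
  show "graph f \<subseteq> carrier G"
    unfolding graph_def using hom_BA_closed[OF f] by auto
  show "graph f \<noteq> {}"
    unfolding graph_def using subgroup.one_closed[OF b_subgroup] by blast
next
  fix \<xi> assume "\<xi> \<in> graph f"
  then obtain \<beta> where "\<beta> \<in> b" "\<xi> = f \<beta> \<otimes> \<beta>" unfolding graph_def by blast
  then have "inv \<xi> = f (inv \<beta>) \<otimes> inv \<beta>"
    using hom_BA_closed[OF f] hom_BA_inv[OF f] by (simp add: inv_components)
  then show "inv \<xi> \<in> graph f" unfolding graph_def using \<open>\<beta> \<in> b\<close> by simp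
next
  fix \<xi> \<xi>' assume "\<xi> \<in> graph f" "\<xi>' \<in> graph f"
  then obtain \<beta> \<beta>' where "\<beta> \<in> b" "\<beta>' \<in> b" "\<xi> = f \<beta> \<otimes> \<beta>" "\<xi>' = f \<beta>' \<otimes> \<beta>'"
    unfolding graph_def by blast
  then have "\<xi> \<otimes> \<xi>' = f (\<beta> \<otimes> \<beta>') \<otimes> (\<beta> \<otimes> \<beta>')"
    using hom_BA_closed[OF f] hom_BA_mult[OF f] mult_components[of "f \<beta>" "f \<beta>'" \<beta> \<beta>'] by simp
  then show "\<xi> \<otimes> \<xi>' \<in> graph f" unfolding graph_def using \<open>\<beta> \<in> b\<close> \<open>\<beta>' \<in> b\<close> by simp
qed

lemma transv_a_graph:
  assumes f: "f \<in> hom B A"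
  shows "transv G a (graph f)"
proof (rule transvI)
  fix \<omega> assume "\<omega> \<in> carrier G"
  then obtain \<alpha> \<beta> where "\<alpha> \<in> a" "\<beta> \<in> b" "\<omega> = \<alpha> \<otimes> \<beta>" using decomposition by blast
  then have "\<omega> = (\<alpha> \<otimes> inv (f \<beta>)) \<otimes> (f \<beta> \<otimes> \<beta>)" "\<alpha> \<otimes> inv (f \<beta>) \<in> a"
    using hom_BA_closed[OF f] by (simp_all add: m_assoc)
  then show "\<exists>\<xi>\<in>a. \<exists>\<eta>\<in>graph f. \<omega> = \<xi> \<otimes> \<eta>"
    unfolding graph_def using \<open>\<beta> \<in> b\<close> by blast
next
  fix \<alpha> \<alpha>' \<xi> \<xi>'
  assume "\<alpha> \<in> a" "\<alpha>' \<in> a" "\<xi> \<in> graph f" "\<xi>' \<in> graph f" "\<alpha> \<otimes> \<xi> = \<alpha>' \<otimes> \<xi>'"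
  moreover obtain \<beta> \<beta>' where "\<beta> \<in> b" "\<beta>' \<in> b" "\<xi> = f \<beta> \<otimes> \<beta>" "\<xi>' = f \<beta>' \<otimes> \<beta>'"
    using \<open>\<xi> \<in> graph f\<close> \<open>\<xi>' \<in> graph f\<close> unfolding graph_def by blast
  ultimately have "(\<alpha> \<otimes> f \<beta>) \<otimes> \<beta> = (\<alpha>' \<otimes> f \<beta>') \<otimes> \<beta>'"
    using hom_BA_closed[OF f] by (simp add: m_assoc)
  then have "\<alpha> \<otimes> f \<beta> = \<alpha>' \<otimes> f \<beta>' \<and> \<beta> = \<beta>'"
    by (rule decomposition_unique[rotated 4])
      (use \<open>\<alpha> \<in> a\<close> \<open>\<alpha>' \<in> a\<close> \<open>\<beta> \<in> b\<close> \<open>\<beta>' \<in> b\<close> hom_BA_closed[OF f] in simp_all)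
  then have "\<beta> = \<beta>'" "\<alpha> \<otimes> f \<beta> = \<alpha>' \<otimes> f \<beta>" by metis+
  then show "\<alpha> = \<alpha>' \<and> \<xi> = \<xi>'"
    using \<open>\<alpha> \<in> a\<close> \<open>\<alpha>' \<in> a\<close> \<open>\<beta> \<in> b\<close> \<open>\<xi> = f \<beta> \<otimes> \<beta>\<close> \<open>\<xi>' = f \<beta>' \<otimes> \<beta>'\<close> hom_BA_closed[OF f]
    by simp
qed

lemma transv_graph_b:
  assumes f: "f \<in> iso B A"
  shows "transv G (graph f) b"
proof -
  have hom: "f \<in> hom B A" and surj: "f ` b = a" and inj: "inj_on f b"
    using f by (simp_all add: iso_iff)
  show ?thesis
  proof (rule transvI)
    fix \<omega> assume "\<omega> \<in> carrier G"
    then obtain \<alpha> \<beta> where "\<alpha> \<in> a" "\<beta> \<in> b" "\<omega> = \<alpha> \<otimes> \<beta>" using decomposition by blast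
    moreover obtain \<beta>' where "\<beta>' \<in> b" "\<alpha> = f \<beta>'" using surj \<open>\<alpha> \<in> a\<close> by blast
    ultimately have "\<omega> = (f \<beta>' \<otimes> \<beta>') \<otimes> (inv \<beta>' \<otimes> \<beta>)" "inv \<beta>' \<otimes> \<beta> \<in> b"
      using hom_BA_closed[OF hom] by (simp_all add: m_assoc)
    then show "\<exists>\<xi>\<in>graph f. \<exists>\<eta>\<in>b. \<omega> = \<xi> \<otimes> \<eta>"
      unfolding graph_def using \<open>\<beta>' \<in> b\<close> by blast
  next
    fix \<xi> \<xi>' \<beta>\<^sub>1 \<beta>\<^sub>1'
    assume "\<xi> \<in> graph f" "\<xi>' \<in> graph f" "\<beta>\<^sub>1 \<in> b" "\<beta>\<^sub>1' \<in> b" "\<xi> \<otimes> \<beta>\<^sub>1 = \<xi>' \<otimes> \<beta>\<^sub>1'"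
    moreover obtain \<beta> \<beta>' where "\<beta> \<in> b" "\<beta>' \<in> b" "\<xi> = f \<beta> \<otimes> \<beta>" "\<xi>' = f \<beta>' \<otimes> \<beta>'"
      using \<open>\<xi> \<in> graph f\<close> \<open>\<xi>' \<in> graph f\<close> unfolding graph_def by blast
    ultimately have "f \<beta> \<otimes> (\<beta> \<otimes> \<beta>\<^sub>1) = f \<beta>' \<otimes> (\<beta>' \<otimes> \<beta>\<^sub>1')"
      using hom_BA_closed[OF hom] by (simp add: m_assoc)
    then have "f \<beta> = f \<beta>' \<and> \<beta> \<otimes> \<beta>\<^sub>1 = \<beta>' \<otimes> \<beta>\<^sub>1'"
      by (rule decomposition_unique[rotated 4])
        (use \<open>\<beta> \<in> b\<close> \<open>\<beta>' \<in> b\<close> \<open>\<beta>\<^sub>1 \<in> b\<close> \<open>\<beta>\<^sub>1' \<in> b\<close> hom_BA_closed[OF hom] in simp_all)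
    moreover from this have "\<beta> = \<beta>'"
      using inj_onD[OF inj] \<open>\<beta> \<in> b\<close> \<open>\<beta>' \<in> b\<close> by blast
    ultimately show "\<xi> = \<xi>' \<and> \<beta>\<^sub>1 = \<beta>\<^sub>1'"
      using \<open>\<beta> \<in> b\<close> \<open>\<beta>\<^sub>1 \<in> b\<close> \<open>\<beta>\<^sub>1' \<in> b\<close> \<open>\<xi> = f \<beta> \<otimes> \<beta>\<close> \<open>\<xi>' = f \<beta>' \<otimes> \<beta>'\<close> by simp
  qed
qed

lemma graph_in_complements: "f \<in> iso B A \<Longrightarrow> graph f \<in> complements"
  unfolding complements_def
  using graph_subgroup transv_a_graph transv_graph_b iso_imp_homomorphism by blast

lemma slope_graph:
  assumes f: "f \<in> iso B A" and "\<beta> \<in> b"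
  shows "slope (graph f) \<beta> = f \<beta>"
proof -
  have "f \<beta> \<otimes> \<beta> \<in> graph f" unfolding graph_def using \<open>\<beta> \<in> b\<close> by blast
  then show ?thesis
    using mem_complement_iff[OF graph_in_complements[OF f]] hom_BA_closed[OF iso_imp_homomorphism[OF f]]
      \<open>\<beta> \<in> b\<close> by blast
qed

lemma Gamma_eq_graph:
  assumes x: "x \<in> complements" and y: "y \<in> complements" and z: "z \<in> complements"
  shows "Gamma G x a y b z = graph (slope x \<circ> inv_into b (slope y) \<circ> slope z)"
proof
  show "Gamma G x a y b z \<subseteq> graph (slope x \<circ> inv_into b (slope y) \<circ> slope z)"
  proof
    fix \<omega> assume "\<omega> \<in> Gamma G x a y b z"
    then obtain \<alpha> \<beta> where "\<omega> \<in> carrier G" "\<alpha> \<in> a" "\<beta> \<in> b"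
      and y_mem: "\<alpha> \<otimes> \<omega> \<otimes> \<beta> \<in> y" and z_mem: "\<alpha> \<otimes> \<omega> \<in> z" and x_mem: "\<omega> \<otimes> \<beta> \<in> x"
      unfolding Gamma_def by blast
    then obtain \<alpha>\<^sub>0 \<beta>\<^sub>0 where ab: "\<alpha>\<^sub>0 \<in> a" "\<beta>\<^sub>0 \<in> b" and \<omega>: "\<omega> = \<alpha>\<^sub>0 \<otimes> \<beta>\<^sub>0"
      using decomposition by blast
    have "(\<alpha> \<otimes> \<alpha>\<^sub>0) \<otimes> \<beta>\<^sub>0 \<in> z" "(\<alpha> \<otimes> \<alpha>\<^sub>0) \<otimes> (\<beta>\<^sub>0 \<otimes> \<beta>) \<in> y" "\<alpha>\<^sub>0 \<otimes> (\<beta>\<^sub>0 \<otimes> \<beta>) \<in> x"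
      using x_mem y_mem z_mem \<open>\<alpha> \<in> a\<close> \<open>\<beta> \<in> b\<close> ab by (simp_all add: \<omega> m_assoc)
    then have "slope z \<beta>\<^sub>0 = \<alpha> \<otimes> \<alpha>\<^sub>0" "slope y (\<beta>\<^sub>0 \<otimes> \<beta>) = \<alpha> \<otimes> \<alpha>\<^sub>0"
      and slope_x: "slope x (\<beta>\<^sub>0 \<otimes> \<beta>) = \<alpha>\<^sub>0"
      using mem_complement_iff x y z \<open>\<alpha> \<in> a\<close> \<open>\<beta> \<in> b\<close> ab by simp_all
    then have "inv_into b (slope y) (slope z \<beta>\<^sub>0) = \<beta>\<^sub>0 \<otimes> \<beta>"
      using y \<open>\<beta> \<in> b\<close> ab by (metis inv_slope_slope subgroup.m_closed b_subgroup)
    then have "\<omega> = (slope x \<circ> inv_into b (slope y) \<circ> slope z) \<beta>\<^sub>0 \<otimes> \<beta>\<^sub>0"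
      using slope_x \<omega> by simp
    then show "\<omega> \<in> graph (slope x \<circ> inv_into b (slope y) \<circ> slope z)"
      unfolding graph_def using ab(2) by blast
  qed
next
  show "graph (slope x \<circ> inv_into b (slope y) \<circ> slope z) \<subseteq> Gamma G x a y b z"
  proof
    fix \<omega> assume "\<omega> \<in> graph (slope x \<circ> inv_into b (slope y) \<circ> slope z)"
    then obtain \<beta>\<^sub>0 where "\<beta>\<^sub>0 \<in> b"
      and \<omega>': "\<omega> = slope x (inv_into b (slope y) (slope z \<beta>\<^sub>0)) \<otimes> \<beta>\<^sub>0"
      unfolding graph_def by auto
    define \<beta>\<^sub>1 where "\<beta>\<^sub>1 = inv_into b (slope y) (slope z \<beta>\<^sub>0)"
    have \<omega>: "\<omega> = slope x \<beta>\<^sub>1 \<otimes> \<beta>\<^sub>0" using \<omega>' \<beta>\<^sub>1_def by simp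
    have "\<beta>\<^sub>1 \<in> b" "slope y \<beta>\<^sub>1 = slope z \<beta>\<^sub>0"
      using \<beta>\<^sub>1_def \<open>\<beta>\<^sub>0 \<in> b\<close> y z by simp_all
    txt \<open>\<open>\<alpha>\<close> and \<open>\<beta>\<close> are forced by the conditions on \<open>z\<close> and \<open>x\<close>.\<close>
    define \<alpha> where "\<alpha> = slope z \<beta>\<^sub>0 \<otimes> inv (slope x \<beta>\<^sub>1)"
    define \<beta> where "\<beta> = inv \<beta>\<^sub>0 \<otimes> \<beta>\<^sub>1"
    have "\<alpha> \<in> a" "\<beta> \<in> b" "\<omega> \<in> carrier G"
      unfolding \<alpha>_def \<beta>_def \<omega> using \<open>\<beta>\<^sub>0 \<in> b\<close> \<open>\<beta>\<^sub>1 \<in> b\<close> x z by simp_all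
    moreover have z_eq: "\<alpha> \<otimes> \<omega> = slope z \<beta>\<^sub>0 \<otimes> \<beta>\<^sub>0"
      unfolding \<alpha>_def \<omega> using \<open>\<beta>\<^sub>0 \<in> b\<close> \<open>\<beta>\<^sub>1 \<in> b\<close> x z by (simp add: m_assoc)
    moreover have "\<omega> \<otimes> \<beta> = slope x \<beta>\<^sub>1 \<otimes> \<beta>\<^sub>1"
      unfolding \<beta>_def \<omega> using \<open>\<beta>\<^sub>0 \<in> b\<close> \<open>\<beta>\<^sub>1 \<in> b\<close> x by (simp add: m_assoc)
    moreover have "\<alpha> \<otimes> \<omega> \<otimes> \<beta> = slope y \<beta>\<^sub>1 \<otimes> \<beta>\<^sub>1"
      unfolding z_eq \<beta>_def \<open>slope y \<beta>\<^sub>1 = slope z \<beta>\<^sub>0\<close>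
      using \<open>\<beta>\<^sub>0 \<in> b\<close> \<open>\<beta>\<^sub>1 \<in> b\<close> z by (simp add: m_assoc)
    ultimately have "\<alpha> \<in> a" "\<beta> \<in> b" "\<omega> \<in> carrier G"
      "\<alpha> \<otimes> \<omega> \<otimes> \<beta> \<in> y" "\<alpha> \<otimes> \<omega> \<in> z" "\<omega> \<otimes> \<beta> \<in> x"
      using \<open>\<beta>\<^sub>0 \<in> b\<close> \<open>\<beta>\<^sub>1 \<in> b\<close> x y z by simp_all
    then show "\<omega> \<in> Gamma G x a y b z"
      unfolding Gamma_def by blast
  qed
qed

lemma slope_composite_iso:
  assumes "x \<in> complements" "y \<in> complements" "z \<in> complements"
  shows "slope x \<circ> inv_into b (slope y) \<circ> slope z \<in> iso B A"
  using iso_set_trans[OF slope_iso[OF assms(3)] iso_set_trans[OF inv_slope_iso slope_iso]] assms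
  by simp

lemma Gamma_in_complements:
  assumes "x \<in> complements" "y \<in> complements" "z \<in> complements"
  shows "Gamma G x a y b z \<in> complements"
  unfolding Gamma_eq_graph[OF assms] using graph_in_complements slope_composite_iso assms by blast

lemma slope_Gamma [simp]:
  assumes "x \<in> complements" "y \<in> complements" "z \<in> complements" "\<beta> \<in> b"
  shows "slope (Gamma G x a y b z) \<beta> = slope x (inv_into b (slope y) (slope z \<beta>))"
  unfolding Gamma_eq_graph[OF assms(1-3)]
  using slope_graph[OF slope_composite_iso] assms by simp

lemma inv_slope_Gamma [simp]:
  assumes "x \<in> complements" "y \<in> complements" "z \<in> complements" "\<alpha> \<in> a"
  shows "inv_into b (slope (Gamma G x a y b z)) \<alpha> = inv_into b (slope z) (slope y (inv_into b (slope x) \<alpha>))"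
proof -
  let ?\<beta> = "inv_into b (slope z) (slope y (inv_into b (slope x) \<alpha>))"
  have "?\<beta> \<in> b" "slope (Gamma G x a y b z) ?\<beta> = \<alpha>" using assms by simp_all
  then show ?thesis using inv_slope_slope[OF Gamma_in_complements[OF assms(1-3)]] by metis
qed

lemma torsor_complements:
  assumes "complements \<noteq> {}"
  shows "torsor complements (\<lambda>x y z. Gamma G x a y b z)"
  unfolding torsor_def
  using assms
  by (intro conjI ballI Gamma_in_complements complements_eqI) (simp_all add: Gamma_in_complements)

definition relative_slope :: "'a set \<Rightarrow> 'a set \<Rightarrow> 'a \<Rightarrow> 'a" where
  "relative_slope c x = (\<lambda>\<alpha>\<in>a. slope x (inv_into b (slope c) \<alpha>))"

lemma relative_slope_auto:
  assumes "c \<in> complements" "x \<in> complements"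
  shows "relative_slope c x \<in> auto A"
  using group.restrict_iso_in_auto[OF A_group iso_set_trans[OF inv_slope_iso slope_iso]] assms
  unfolding relative_slope_def by (simp add: comp_def)

lemma relative_slope_iso:
  assumes c: "c \<in> complements"
  shows "relative_slope c \<in> iso (torsor_group complements (\<lambda>x y z. Gamma G x a y b z) c) (AutoGroup A)"
proof -
  have carrier_Auto: "carrier (AutoGroup A) = auto A"
    by (simp add: AutoGroup_def)
  have mult_Auto: "f \<otimes>\<^bsub>AutoGroup A\<^esub> g = compose a f g" if "f \<in> auto A" "g \<in> auto A" for f g
    using that by (simp add: AutoGroup_def BijGroup_def auto_def)
  have "relative_slope c (Gamma G x a c b z) = compose a (relative_slope c x) (relative_slope c z)"
    if "x \<in> complements" "z \<in> complements" for x z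
    unfolding relative_slope_def compose_def by (rule restrict_ext) (use that c in simp)
  then have "relative_slope c \<in> hom (torsor_group complements (\<lambda>x y z. Gamma G x a y b z) c) (AutoGroup A)"
    by (intro homI) (simp_all add: torsor_group_def carrier_Auto relative_slope_auto c mult_Auto)
  moreover have "inj_on (relative_slope c) complements"
  proof
    fix x z assume x: "x \<in> complements" and z: "z \<in> complements"
      and eq: "relative_slope c x = relative_slope c z"
    show "x = z"
    proof (rule complements_eqI[OF x z])
      fix \<beta> assume "\<beta> \<in> b"
      then show "slope x \<beta> = slope z \<beta>"
        using fun_cong[OF eq, of "slope c \<beta>"] c by (simp add: relative_slope_def)
    qed
  qed
  moreover have "auto A \<subseteq> relative_slope c ` complements"
  proof
    fix h assume h: "h \<in> auto A"
    have iso: "h \<circ> slope c \<in> iso B A"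
      using iso_set_trans[OF slope_iso[OF c] auto_imp_iso[OF h]] .
    have "relative_slope c (graph (h \<circ> slope c)) = restrict h a"
      unfolding relative_slope_def using slope_graph[OF iso] c by (intro restrict_ext) simp
    also have "\<dots> = h"
      using h by (simp add: auto_def Bij_def extensional_restrict)
    finally show "h \<in> relative_slope c ` complements"
      using graph_in_complements[OF iso] by (metis image_eqI)
  qed
  ultimately show ?thesis
    using relative_slope_auto[OF c]
    by (auto simp: iso_iff torsor_group_def carrier_Auto)
qed

definition coordinates :: "'a set \<Rightarrow> 'a \<Rightarrow> 'a \<times> 'a" where
  "coordinates c \<omega> = (proj_a \<omega>, slope c (proj_b \<omega>))"

lemma coordinates_iso:
  assumes c: "c \<in> complements"
  shows "coordinates c \<in> iso G (A \<times>\<times> A)"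
proof -
  have "coordinates c \<in> hom G (A \<times>\<times> A)"
    unfolding coordinates_def
    using proj_decomposition proj_mult hom_BA_mult[OF iso_imp_homomorphism[OF slope_iso[OF c]]] c
    by (intro homI) simp_all
  moreover have "bij_betw (coordinates c) (carrier G) (a \<times> a)"
  proof (rule bij_betw_byWitness[where f' = "\<lambda>(p, q). p \<otimes> inv_into b (slope c) q"])
    show "\<forall>\<omega>\<in>carrier G. (\<lambda>(p, q). p \<otimes> inv_into b (slope c) q) (coordinates c \<omega>) = \<omega>"
      unfolding coordinates_def using proj_decomposition c by simp
    show "\<forall>pq\<in>a \<times> a. coordinates c ((\<lambda>(p, q). p \<otimes> inv_into b (slope c) q) pq) = pq"
      unfolding coordinates_def using c by auto
    show "coordinates c ` carrier G \<subseteq> a \<times> a"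
      unfolding coordinates_def using proj_decomposition c by auto
    show "(\<lambda>(p, q). p \<otimes> inv_into b (slope c) q) ` (a \<times> a) \<subseteq> carrier G"
      using c by auto
  qed
  ultimately show ?thesis by (simp add: iso_def)
qed

lemma coordinates_image:
  assumes c: "c \<in> complements"
  shows "coordinates c ` a = a \<times> {\<one>}" "coordinates c ` b = {\<one>} \<times> a"
    "coordinates c ` c = {(x, x) | x. x \<in> a}"
proof -
  show "coordinates c ` a = a \<times> {\<one>}"
    unfolding coordinates_def using proj_of_a c by force
  have "coordinates c ` b = (\<lambda>\<beta>. (\<one>, slope c \<beta>)) ` b"
    unfolding coordinates_def using proj_of_b by (simp cong: image_cong)
  then show "coordinates c ` b = {\<one>} \<times> a"
    using bij_betw_imp_surj_on[OF slope_bij[OF c]] by auto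
  have "coordinates c ` c = (\<lambda>\<beta>. (slope c \<beta>, slope c \<beta>)) ` b"
    by (subst complement_eq_graph[OF c]) (simp add: graph_def image_image coordinates_def c cong: image_cong)
  then show "coordinates c ` c = {(x, x) | x. x \<in> a}"
    using bij_betw_imp_surj_on[OF slope_bij[OF c]] by auto
qed


lemma transv_iff_product_iso:
  assumes "subgroup c G"
  shows "transv G b c \<and> transv G c a \<longleftrightarrow>
    (\<exists>\<phi>. \<phi> \<in> iso G (A \<times>\<times> A) \<and> \<phi> ` a = a \<times> {\<one>} \<and> \<phi> ` b = {\<one>} \<times> a
      \<and> \<phi> ` c = {(x, x) | x. x \<in> a})"
proof
  assume "transv G b c \<and> transv G c a"
  then have "c \<in> complements" using mem_complements_iff_transv[OF assms] by blast
  then show "\<exists>\<phi>. \<phi> \<in> iso G (A \<times>\<times> A) \<and> \<phi> ` a = a \<times> {\<one>} \<and> \<phi> ` b = {\<one>} \<times> a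
      \<and> \<phi> ` c = {(x, x) | x. x \<in> a}"
    using coordinates_iso coordinates_image by (intro exI[of _ "coordinates c"]) simp
next
  assume "\<exists>\<phi>. \<phi> \<in> iso G (A \<times>\<times> A) \<and> \<phi> ` a = a \<times> {\<one>} \<and> \<phi> ` b = {\<one>} \<times> a
      \<and> \<phi> ` c = {(x, x) | x. x \<in> a}"
  then obtain \<phi> where "\<phi> \<in> iso G (A \<times>\<times> A)" "\<phi> ` a = a \<times> {\<one>}" "\<phi> ` b = {\<one>} \<times> a"
    "\<phi> ` c = {(x, x) | x. x \<in> a}"
    by (elim exE conjE) (rule that)
  then show "transv G b c \<and> transv G c a"
    by (rule transv_of_product_iso[OF a_subgroup subgroup.subset[OF b_subgroup] subgroup.subset[OF assms]])
qed
end

theorem theorem4p6: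
  fixes G (structure)
  fixes a b c :: "'g set"
  assumes "group G"
    and "subgroup a G" and "subgroup b G" and "subgroup c G"
    and "transv G a b"
    and "\<forall>\<alpha>\<in>a. \<forall>\<beta>\<in>b. \<alpha> \<otimes> \<beta> = \<beta> \<otimes> \<alpha>"
  shows "((transv G b c \<and> transv G c a) \<longleftrightarrow>
           (\<exists>\<phi>. \<phi> \<in> iso G (G\<lparr>carrier := a\<rparr> \<times>\<times> G\<lparr>carrier := a\<rparr>)
               \<and> \<phi> ` a = a \<times> {\<one>}
               \<and> \<phi> ` b = {\<one>} \<times> a
               \<and> \<phi> ` c = {(x, x) | x. x \<in> a}))
         \<and> (transv G b c \<and> transv G c a \<longrightarrow>
           torsor (Uab G a b \<inter> Gras G) (Ulaw G a b)
           \<and> torsor_group (Uab G a b \<inter> Gras G) (Ulaw G a b) c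
               \<cong> AutoGroup (G\<lparr>carrier := a\<rparr>))"
proof -
  interpret internal_direct_product G a b
    unfolding internal_direct_product_def internal_direct_product_axioms_def using assms by blast
  have U: "Uab G a b \<inter> Gras G = complements"
    unfolding Uab_def Gras_def complements_def using subgroup.subset by blast
  have law: "Ulaw G a b = (\<lambda>x y z. Gamma G x a y b z)"
    by (simp add: fun_eq_iff Ulaw_def)
  show ?thesis
    unfolding U law
  proof (intro conjI impI transv_iff_product_iso[OF assms(4)])
    assume "transv G b c \<and> transv G c a"
    then have c: "c \<in> complements" using mem_complements_iff_transv[OF assms(4)] by blast
    then show "torsor complements (\<lambda>x y z. Gamma G x a y b z)"
      using torsor_complements by blast
    show "torsor_group complements (\<lambda>x y z. Gamma G x a y b z) c \<cong> AutoGroup A"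
      using is_isoI[OF relative_slope_iso[OF c]] .
  qed
qed

end
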